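(* Let $n\ge3$ be odd and let $D\subseteq\{0,1,\dots,n-1\}$ with $|D|=2$. Then the unidirectional cycle $\overrightarrow{C_n}$ is $(\{0,1,\dots,n-1\}\setminus D)$-antimagic.
   Context: An oriented graph is a simple graph each of whose edges is given one direction. For vertices $u,v$, $d(u,v)$ is the length of a shortest directed path from $u$ to $v$ ($d(u,u)=0$). For a set $D$ of nonnegative integers, $N_D(v)=\{y : d(v,y)\in D\}$; for a bijection $f:V\to\{1,\dots,|V|\}$, $\omega_D(v)=\sum_{x\in N_D(v)}f(x)$ (empty sum $0$); $f$ is $D$-antimagic if distinct vertices have distinct $D$-weights, and the graph is $D$-antimagic if such an $f$ exists. The unidirectional cycle $\overrightarrow{C_n}$ ($n\ge3$) has vertices $v_1,\dots,v_n$ and arcs $(v_i,v_{i+1})$ for $1\le i\le n-1$ and $(v_n,v_1)$; $d(v_i,v_j)=(j-i)\bmod n$. *)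

theory Defs
  imports Main
begin

definition D_neigh :: "'a set \<Rightarrow> ('a \<Rightarrow> 'a \<Rightarrow> nat) \<Rightarrow> nat set \<Rightarrow> 'a \<Rightarrow> 'a set" where
  "D_neigh V d D v = {y \<in> V. d v y \<in> D}"

definition D_weight :: "'a set \<Rightarrow> ('a \<Rightarrow> 'a \<Rightarrow> nat) \<Rightarrow> nat set \<Rightarrow> ('a \<Rightarrow> nat) \<Rightarrow> 'a \<Rightarrow> nat" where
  "D_weight V d D f v = (\<Sum>x\<in>D_neigh V d D v. f x)"

definition D_antimagic_labeling :: "'a set \<Rightarrow> ('a \<Rightarrow> 'a \<Rightarrow> nat) \<Rightarrow> nat set \<Rightarrow> ('a \<Rightarrow> nat) \<Rightarrow> bool" where
  "D_antimagic_labeling V d D f \<longleftrightarrow>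
     bij_betw f V {1..card V} \<and> inj_on (D_weight V d D f) V"

definition D_antimagic :: "'a set \<Rightarrow> ('a \<Rightarrow> 'a \<Rightarrow> nat) \<Rightarrow> nat set \<Rightarrow> bool" where
  "D_antimagic V d D \<longleftrightarrow> (\<exists>f. D_antimagic_labeling V d D f)"

(* Unidirectional cycle C_n: vertex v_{i+1} is represented by i \<in> {0..<n},
   arcs i \<rightarrow> (i+1) mod n; distance d(v_i,v_j) = (j - i) mod n. *)

definition ucycle_verts :: "nat \<Rightarrow> nat set" where
  "ucycle_verts n = {0..<n}"

definition ucycle_dist :: "nat \<Rightarrow> nat \<Rightarrow> nat \<Rightarrow> nat" where
  "ucycle_dist n i j = nat ((int j - int i) mod int n)"

end

theory Submission
  imports Defs "HOL-Number_Theory.Cong"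
begin

text \<open>On the full distance set every vertex sees the whole cycle, so the weight for the
  complement of \<open>D\<close> is the total label sum minus the \<open>D\<close>-weight. For \<open>D = {a, b}\<close> and the
  labeling \<open>v \<mapsto> v + 1\<close>, the \<open>D\<close>-weight of \<open>v\<close> is \<open>(v + a) mod n + (v + b) mod n + 2\<close>,
  which is congruent to \<open>2v + a + b\<close> modulo \<open>n\<close>; as \<open>n\<close> is odd, \<open>2\<close> is invertible
  modulo \<open>n\<close>, so this weight determines \<open>v\<close>.\<close>

lemma D_neigh_diff:
  assumes "D \<subseteq> A"
  shows "D_neigh V d (A - D) v = D_neigh V d A v - D_neigh V d D v"
    and "D_neigh V d D v \<subseteq> D_neigh V d A v"
  using assms by (auto simp: D_neigh_def)

lemma inj_on_D_weight_complement:
  assumes "finite V" and "D \<subseteq> A" and full: "\<And>v. v \<in> V \<Longrightarrow> D_neigh V d A v = V"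
    and "inj_on (D_weight V d D f) V"
  shows "inj_on (D_weight V d (A - D) f) V"
proof -
  have weight: "D_weight V d (A - D) f v = sum f V - D_weight V d D f v"
    and bound: "D_weight V d D f v \<le> sum f V" if "v \<in> V" for v
  proof -
    have sub: "D_neigh V d D v \<subseteq> V"
      using D_neigh_diff(2)[OF \<open>D \<subseteq> A\<close>, of V d v] unfolding full[OF that] .
    show "D_weight V d (A - D) f v = sum f V - D_weight V d D f v"
      unfolding D_weight_def D_neigh_diff(1)[OF \<open>D \<subseteq> A\<close>] full[OF that]
      using sub \<open>finite V\<close> by (intro sum_diff_nat) (auto intro: finite_subset)
    show "D_weight V d D f v \<le> sum f V"
      unfolding D_weight_def using sub \<open>finite V\<close> by (intro sum_mono2) auto
  qed
  show ?thesis
  proof (rule inj_onI)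
    fix v w
    assume "v \<in> V" "w \<in> V" "D_weight V d (A - D) f v = D_weight V d (A - D) f w"
    then have "D_weight V d D f v = D_weight V d D f w"
      using weight bound by (metis diff_diff_cancel)
    with \<open>v \<in> V\<close> \<open>w \<in> V\<close> show "v = w"
      using assms(4) by (auto dest: inj_onD)
  qed
qed

lemma ucycle_dist_eq:
  assumes "v < n" and "y < n"
  shows "ucycle_dist n v y = (if v \<le> y then y - v else y + n - v)"
proof (cases "v \<le> y")
  case True
  then have "(int y - int v) mod int n = int y - int v"
    using assms by (intro mod_pos_pos_trivial) auto
  then show ?thesis
    using True by (simp add: ucycle_dist_def)
next
  case False
  have "(int y - int v) mod int n = (int y - int v + int n) mod int n"
    by simp
  also have "\<dots> = int y - int v + int n"
    using assms False by (intro mod_pos_pos_trivial) auto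
  finally show ?thesis
    using False by (simp add: ucycle_dist_def)
qed

lemma ucycle_dist_eq_iff:
  assumes "v < n" and "y < n" and "c < n"
  shows "ucycle_dist n v y = c \<longleftrightarrow> y = (v + c) mod n"
  using assms by (simp add: ucycle_dist_eq mod_if) arith

lemma ucycle_dist_less: "0 < n \<Longrightarrow> ucycle_dist n v y < n"
  unfolding ucycle_dist_def by (simp add: nat_less_iff)

lemma ucycle_D_neigh:
  assumes "v < n" and "D \<subseteq> {0..<n}"
  shows "D_neigh (ucycle_verts n) (ucycle_dist n) D v = (\<lambda>c. (v + c) mod n) ` D"
proof -
  have "y \<in> D_neigh (ucycle_verts n) (ucycle_dist n) D v \<longleftrightarrow> y \<in> (\<lambda>c. (v + c) mod n) ` D"
    for y
  proof
    assume "y \<in> D_neigh (ucycle_verts n) (ucycle_dist n) D v"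
    then have "y < n" and dist: "ucycle_dist n v y \<in> D"
      by (auto simp: D_neigh_def ucycle_verts_def)
    have "ucycle_dist n v y < n"
      using ucycle_dist_less \<open>v < n\<close> by simp
    then have "y = (v + ucycle_dist n v y) mod n"
      by (simp flip: ucycle_dist_eq_iff[OF \<open>v < n\<close> \<open>y < n\<close>])
    with dist show "y \<in> (\<lambda>c. (v + c) mod n) ` D"
      by (rule rev_image_eqI)
  next
    assume "y \<in> (\<lambda>c. (v + c) mod n) ` D"
    then obtain c where "c \<in> D" and y: "y = (v + c) mod n" by blast
    with assms have "ucycle_dist n v y = c"
      using ucycle_dist_eq_iff[of v n y c] by auto
    with \<open>c \<in> D\<close> y \<open>v < n\<close> show "y \<in> D_neigh (ucycle_verts n) (ucycle_dist n) D v"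
      by (simp add: D_neigh_def ucycle_verts_def)
  qed
  then show ?thesis by blast
qed

lemma mod_add_pair_sum_inj:
  fixes n v w a b :: nat
  assumes "odd n" and "v < n" and "w < n"
    and "(v + a) mod n + (v + b) mod n = (w + a) mod n + (w + b) mod n"
  shows "v = w"
proof -
  have "[2 * v + (a + b) = 2 * w + (a + b)] (mod n)"
    using arg_cong[OF assms(4), of "\<lambda>x. x mod n"]
    by (simp add: cong_def mod_add_eq mult_2 add_ac)
  then have "[2 * v = 2 * w] (mod n)"
    by (simp only: cong_add_rcancel_nat)
  then have "[v = w] (mod n)"
    using \<open>odd n\<close> by (simp add: cong_mult_lcancel_nat)
  then show ?thesis
    using assms(2,3) by (simp add: cong_def)
qed

lemma ucycle_D_weight_pair:
  assumes "v < n" and "a < n" and "b < n" and "a \<noteq> b"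
  shows "D_weight (ucycle_verts n) (ucycle_dist n) {a, b} Suc v = (v + a) mod n + (v + b) mod n + 2"
proof -
  have "(v + a) mod n \<noteq> (v + b) mod n"
    using assms by (auto simp: mod_if split: if_splits)
  moreover have "D_neigh (ucycle_verts n) (ucycle_dist n) {a, b} v = {(v + a) mod n, (v + b) mod n}"
    using ucycle_D_neigh[OF \<open>v < n\<close>, of "{a, b}"] assms by simp
  ultimately show ?thesis
    unfolding D_weight_def by simp
qed

lemma inj_on_ucycle_D_weight_pair:
  assumes "odd n" and "a < n" and "b < n" and "a \<noteq> b"
  shows "inj_on (D_weight (ucycle_verts n) (ucycle_dist n) {a, b} Suc) (ucycle_verts n)"
proof (rule inj_onI)
  fix v w
  assume "v \<in> ucycle_verts n" "w \<in> ucycle_verts n"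
    and "D_weight (ucycle_verts n) (ucycle_dist n) {a, b} Suc v =
      D_weight (ucycle_verts n) (ucycle_dist n) {a, b} Suc w"
  then show "v = w"
    using mod_add_pair_sum_inj[OF \<open>odd n\<close>, of v w a b]
      ucycle_D_weight_pair[OF _ assms(2-4), of v] ucycle_D_weight_pair[OF _ assms(2-4), of w]
    by (simp add: ucycle_verts_def)
qed

lemma ucycle_D_neigh_all:
  assumes "v < n"
  shows "D_neigh (ucycle_verts n) (ucycle_dist n) {0..<n} v = ucycle_verts n"
  using assms by (auto simp: D_neigh_def ucycle_verts_def ucycle_dist_less)

theorem mainTheorem16:
  fixes n :: nat and D :: "nat set"
  assumes "n \<ge> 3" and "odd n"
    and "D \<subseteq> {0..<n}" and "card D = 2"
  shows "D_antimagic (ucycle_verts n) (ucycle_dist n) ({0..<n} - D)"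
proof -
  obtain a b where D: "D = {a, b}" "a \<noteq> b" and ab: "a < n" "b < n"
    using \<open>card D = 2\<close> \<open>D \<subseteq> {0..<n}\<close> by (auto simp: card_2_iff)
  have "inj_on (D_weight (ucycle_verts n) (ucycle_dist n) D Suc) (ucycle_verts n)"
    using inj_on_ucycle_D_weight_pair[OF \<open>odd n\<close> ab \<open>a \<noteq> b\<close>] D by simp
  then have "inj_on (D_weight (ucycle_verts n) (ucycle_dist n) ({0..<n} - D) Suc) (ucycle_verts n)"
    using \<open>D \<subseteq> {0..<n}\<close> ucycle_D_neigh_all
    by (intro inj_on_D_weight_complement) (auto simp: ucycle_verts_def)
  moreover have "bij_betw Suc (ucycle_verts n) {1..card (ucycle_verts n)}"
    by (simp add: ucycle_verts_def bij_betw_def image_Suc_atLeastLessThan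
        atLeastLessThanSuc_atLeastAtMost)
  ultimately show ?thesis
    unfolding D_antimagic_def D_antimagic_labeling_def by blast
qed

end
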